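(* Consider one time step (from time $t-1$ to time $t$, $t\ge1$) of the multi-class stochastic six-vertex model with classes $\{1,\dots,n\}$ and finitely many particles, and let $p_{t-1}^{(r)}(k)$ and $p_t^{(r)}(k)$ denote the positions before and after the step of the $k$-th particle of class $r$ (class-$r$ particles tagged in increasing order of position). Then for every integer $v\ge0$, every $r\in[1,n]$ and every label $k$, $$\mathbb P\big[p_t^{(r)}(k)-p_{t-1}^{(r)}(k)\ge v\big]\le b_2^{v-1}.$$
   Context: Fix $0<b_1<b_2<1$. Multi-class stochastic six-vertex dynamics: each site of $\mathbb Z$ holds nothing or a particle of class $r\in\{1,\dots,n\}$. One step uses independent $\chi^{(r)}(x)$ ($P[=1]=b_1$, else 0) and $j^{(r)}(x)$ ($P[=m]=(1-b_2)b_2^{m-1}$, $m\ge1$). Particles are updated in increasing class order and, within a class, from left to right. For the $k$-th class-$r$ particle at $x$, with the $(k+1)$-th class-$r$ particle at old position $y$ ($\infty$ if none): (a) it stays if some particle of class $<r$ jumped this step from a site $<x$ to a site $>x$; (b) otherwise it moves if site $x$ is already occupied at the new time by a class-$<r$ particle or by the $(k-1)$-th class-$r$ particle; (c) otherwise it stays if $\chi^{(r)}(x)=1$ and moves if $\chi^{(r)}(x)=0$. If it moves, its new position is $\min\{U,V,y\}$, where $U$ is the least site $>x$ that is the old position of a class-$<r$ particle that moved in this step, and $V$ is the site reached by advancing $j^{(r)}(x)$ sites to the right of $x$, not counting sites occupied by class-$<r$ particles that stayed. *)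

theory Defs
  imports "HOL-Probability.Probability" "HOL-Probability.Product_PMF"
begin

text \<open>Configuration: conf x = 0 means site x is empty, conf x = r (r \<ge> 1) means site x
holds a particle of class r.\<close>

definition cls_pos :: "(int \<Rightarrow> nat) \<Rightarrow> nat \<Rightarrow> int list" where
  "cls_pos conf r = sorted_list_of_set {x. conf x = r}"

fun adv :: "int set \<Rightarrow> int \<Rightarrow> nat \<Rightarrow> int" where
  "adv S x 0 = x"
| "adv S x (Suc m) = (LEAST z. adv S x m < z \<and> z \<notin> S)"

text \<open>Update of the class-r particles (old positions in increasing order), given the list L of
(old, new) positions of all particles of class < r, the coin chi (True means chi = 1), the jump
sizes jj, and the new position of the previous class-r particle.\<close>
fun cls_step :: "(int \<times> int) list \<Rightarrow> (int \<Rightarrow> bool) \<Rightarrow> (int \<Rightarrow> nat) \<Rightarrow> int option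
    \<Rightarrow> int list \<Rightarrow> int list" where
  "cls_step L ch jj prev [] = []"
| "cls_step L ch jj prev (x # rest) =
    (let blocked = (\<exists>(a, b) \<in> set L. a < x \<and> x < b);
         forced = ((\<exists>(a, b) \<in> set L. b = x) \<or> prev = Some x);
         moves = (\<not> blocked \<and> (forced \<or> \<not> ch x));
         U = {a. \<exists>b. (a, b) \<in> set L \<and> a \<noteq> b \<and> x < a};
         V = adv {a. (a, a) \<in> set L} x (jj x);
         Y = set (take 1 rest);
         nx = (if moves then Min (insert V (U \<union> Y)) else x)
     in nx # cls_step L ch jj (Some nx) rest)"

text \<open>Randomness: \<omega> (r, x) = (chi^(r)(x), j^(r)(x)).
lower_moves conf \<omega> r = (old, new) positions of all particles of class < r.\<close>
fun lower_moves :: "(int \<Rightarrow> nat) \<Rightarrow> (nat \<times> int \<Rightarrow> bool \<times> nat) \<Rightarrow> nat \<Rightarrow> (int \<times> int) list" where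
  "lower_moves conf \<omega> 0 = []"
| "lower_moves conf \<omega> (Suc r) =
    (let L = lower_moves conf \<omega> r in
     if r = 0 then [] else
     L @ zip (cls_pos conf r)
             (cls_step L (\<lambda>x. fst (\<omega> (r, x))) (\<lambda>x. snd (\<omega> (r, x))) None (cls_pos conf r)))"

definition new_pos :: "(int \<Rightarrow> nat) \<Rightarrow> (nat \<times> int \<Rightarrow> bool \<times> nat) \<Rightarrow> nat \<Rightarrow> int list" where
  "new_pos conf \<omega> r =
     cls_step (lower_moves conf \<omega> r) (\<lambda>x. fst (\<omega> (r, x))) (\<lambda>x. snd (\<omega> (r, x))) None
              (cls_pos conf r)"

text \<open>Law of the inputs: independent chi ~ Bernoulli(b1) and j with P[j = m] = (1-b2) b2^(m-1),
m \<ge> 1, for every class and every occupied site (the only inputs the step reads).\<close>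
definition inputs :: "nat \<Rightarrow> (int \<Rightarrow> nat) \<Rightarrow> real \<Rightarrow> real \<Rightarrow> (nat \<times> int \<Rightarrow> bool \<times> nat) pmf" where
  "inputs n conf b1 b2 =
     Pi_pmf ({1..n} \<times> {x. conf x \<noteq> 0}) (False, 1)
       (\<lambda>_. pair_pmf (bernoulli_pmf b1) (map_pmf Suc (geometric_pmf (1 - b2))))"

end

(* If the k-th class-r particle at x advances by at least v, nothing may cut its jump short:
   every particle of lower class that started in (x, x+v) must have stayed, and since no
   lower-class particle jumped over it, it stayed only because its coin chi equals 1.
   The jump of length j^(r)(x) skips exactly the sites of staying lower particles, so
   j^(r)(x) >= v - s, where s is the number of those particles. The s coins and the jump
   are independent inputs, so the probability is at most b1^s b2^(v-s-1) <= b2^(v-1). *)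

theory Submission
  imports Defs
begin

lemma Least_above_notin_finite:
  fixes a :: int
  assumes "finite S"
  defines "z \<equiv> LEAST z. a < z \<and> z \<notin> S"
  shows "a < z" "z \<notin> S" "{a<..<z} \<subseteq> S"
proof -
  define M where "M = Max (insert a S) + 1"
  have "\<forall>y\<in>insert a S. y \<le> Max (insert a S)" using assms(1) by simp
  then have M: "a < M" "M \<notin> S" unfolding M_def by auto
  define T where "T = {a<..M} - S"
  have T: "finite T" "M \<in> T" unfolding T_def using M by auto
  have "Min T \<in> T" using T by (intro Min_in) auto
  have "z = Min T" unfolding z_def
  proof (rule Least_equality)
    show "a < Min T \<and> Min T \<notin> S" using \<open>Min T \<in> T\<close> unfolding T_def by auto
    show "Min T \<le> y" if y: "a < y \<and> y \<notin> S" for y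
    proof (cases "y \<le> M")
      case True
      then have "y \<in> T" using y unfolding T_def by auto
      then show ?thesis using T(1) by simp
    next
      case False
      then show ?thesis using Min_le[OF T] by linarith
    qed
  qed
  then have z: "z \<in> T" "\<And>t. t \<in> T \<Longrightarrow> z \<le> t" using \<open>Min T \<in> T\<close> T(1) by simp_all
  then show "a < z" "z \<notin> S" unfolding T_def by auto
  have "z \<le> M" using z T by blast
  then show "{a<..<z} \<subseteq> S" using z(2) unfolding T_def by fastforce
qed

lemma adv_Suc:
  assumes "finite S"
  shows "adv S x m < adv S x (Suc m)" "adv S x (Suc m) \<notin> S" "{adv S x m<..<adv S x (Suc m)} \<subseteq> S"
  using Least_above_notin_finite[OF assms] by simp_all

lemma strict_mono_adv: "finite S \<Longrightarrow> strict_mono (adv S x)"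
  unfolding strict_mono_Suc_iff using adv_Suc(1) by blast

lemma card_adv: "finite S \<Longrightarrow> card ({x<..adv S x m} - S) = m"
proof (induction m)
  case 0
  then show ?case by simp
next
  case (Suc m)
  define a b where "a = adv S x m" and "b = adv S x (Suc m)"
  have ab: "a < b" "b \<notin> S" "{a<..<b} \<subseteq> S"
    using adv_Suc[OF Suc.prems, of x m] unfolding a_def b_def by simp_all
  have "x \<le> a"
    using strict_mono_less_eq[OF strict_mono_adv[OF Suc.prems, of x], of 0 m] unfolding a_def by simp
  with ab have "{x<..b} - S = insert b ({x<..a} - S)"
    by (auto simp: subset_iff) (metis neq_iff not_less)
  moreover have "b \<notin> {x<..a} - S" using ab by auto
  ultimately show ?case using Suc unfolding a_def b_def by simp
qed

lemma card_less_adv: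
  assumes "finite S" "x \<le> y" "y < adv S x m"
  shows "card ({x<..y} - S) < m"
proof -
  define a where "a = adv S x m"
  have "m \<noteq> 0" using assms(2,3) by (metis adv.simps(1) not_le)
  then have "a \<notin> S" using adv_Suc(2)[OF assms(1), of x "m - 1"] unfolding a_def by simp
  with assms have "a \<in> {x<..a} - S" "a \<notin> {x<..y} - S" "{x<..y} - S \<subseteq> {x<..a} - S"
    unfolding a_def[symmetric] by auto
  then have "{x<..y} - S \<subset> {x<..a} - S" by blast
  then have "card ({x<..y} - S) < card ({x<..a} - S)" by (intro psubset_card_mono) simp_all
  then show ?thesis using card_adv[OF assms(1)] unfolding a_def by simp
qed

definition new_site :: "(int \<times> int) list \<Rightarrow> (int \<Rightarrow> bool) \<Rightarrow> (int \<Rightarrow> nat) \<Rightarrow> int option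
    \<Rightarrow> int \<Rightarrow> int list \<Rightarrow> int" where
  "new_site L ch jj prev x rest =
    (let blocked = (\<exists>(a, b) \<in> set L. a < x \<and> x < b);
         forced = ((\<exists>(a, b) \<in> set L. b = x) \<or> prev = Some x);
         moves = (\<not> blocked \<and> (forced \<or> \<not> ch x));
         U = {a. \<exists>b. (a, b) \<in> set L \<and> a \<noteq> b \<and> x < a};
         V = adv {a. (a, a) \<in> set L} x (jj x);
         Y = set (take 1 rest)
     in (if moves then Min (insert V (U \<union> Y)) else x))"

lemma cls_step_Cons:
  "cls_step L ch jj prev (x # rest) =
     new_site L ch jj prev x rest # cls_step L ch jj (Some (new_site L ch jj prev x rest)) rest"
  unfolding cls_step.simps new_site_def Let_def ..

declare cls_step.simps(2)[simp del]

lemma length_cls_step [simp]: "length (cls_step L ch jj prev xs) = length xs"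
  by (induction xs arbitrary: prev) (auto simp: cls_step_Cons)

lemma nth_cls_step:
  "k < length xs \<Longrightarrow> \<exists>p. cls_step L ch jj prev xs ! k = new_site L ch jj p (xs ! k) (drop (Suc k) xs)"
  by (induction xs arbitrary: prev k) (auto simp: cls_step_Cons nth_Cons split: nat.split)

lemma finite_fst_mem_set: "finite {a. \<exists>b. (a, b) \<in> set L \<and> P a b}"
  by (rule finite_subset[of _ "fst ` set L"]) force+

lemma new_site_moved:
  assumes "new_site L ch jj p x rest \<noteq> x"
  shows "\<not> (\<exists>(a, b) \<in> set L. a < x \<and> x < b)"
    and "new_site L ch jj p x rest \<le> adv {a. (a, a) \<in> set L} x (jj x)"
    and "(a, b) \<in> set L \<Longrightarrow> a \<noteq> b \<Longrightarrow> x < a \<Longrightarrow> new_site L ch jj p x rest \<le> a"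
proof -
  define M where "M = insert (adv {a. (a, a) \<in> set L} x (jj x))
    ({a. \<exists>b. (a, b) \<in> set L \<and> a \<noteq> b \<and> x < a} \<union> set (take 1 rest))"
  have fin: "finite M"
    unfolding M_def using finite_fst_mem_set[of L "\<lambda>a b. a \<noteq> b \<and> x < a"] by simp
  have eq: "new_site L ch jj p x rest = Min M"
    using assms unfolding new_site_def Let_def M_def by (auto split: if_splits)
  show "\<not> (\<exists>(a, b) \<in> set L. a < x \<and> x < b)"
    using assms unfolding new_site_def Let_def by (auto split: if_splits)
  show "new_site L ch jj p x rest \<le> adv {a. (a, a) \<in> set L} x (jj x)"
    using eq Min_le[OF fin] unfolding M_def by simp
  show "new_site L ch jj p x rest \<le> a" if "(a, b) \<in> set L" "a \<noteq> b" "x < a"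
  proof -
    have "a \<in> M" using that unfolding M_def by blast
    then show ?thesis using eq Min_le[OF fin] by simp
  qed
qed

lemma new_site_stays:
  assumes "new_site L ch jj p x rest = x" "1 \<le> jj x" "\<forall>y\<in>set rest. x < y"
  shows "(\<exists>(a, b) \<in> set L. a < x \<and> x < b) \<or> ch x"
proof (rule ccontr)
  assume free: "\<not> ((\<exists>(a, b) \<in> set L. a < x \<and> x < b) \<or> ch x)"
  let ?S = "{a. (a, a) \<in> set L}"
  let ?U = "{a. \<exists>b. (a, b) \<in> set L \<and> a \<noteq> b \<and> x < a}"
  have "finite ?S" using finite_fst_mem_set[of L "\<lambda>a b. a = b"] by simp
  then have "x < adv ?S x (jj x)"
    using strict_monoD[OF strict_mono_adv, of ?S 0 "jj x" x] assms(2) by simp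
  moreover have "finite ?U" using finite_fst_mem_set[of L "\<lambda>a b. a \<noteq> b \<and> x < a"] by simp
  ultimately have "x < Min (insert (adv ?S x (jj x)) (?U \<union> set (take 1 rest)))"
    using assms(3) by (auto dest: in_set_takeD)
  moreover have "new_site L ch jj p x rest = Min (insert (adv ?S x (jj x)) (?U \<union> set (take 1 rest)))"
    using free unfolding new_site_def Let_def by auto
  ultimately show False using assms(1) by simp
qed

lemma set_cls_pos: "finite {x. conf x \<noteq> 0} \<Longrightarrow> 1 \<le> c \<Longrightarrow> set (cls_pos conf c) = {x. conf x = c}"
  unfolding cls_pos_def by (simp add: rev_finite_subset[of "{x. conf x \<noteq> 0}"] subset_iff)

lemma cls_of_mem_cls_pos: "a \<in> set (cls_pos conf c) \<Longrightarrow> conf a = c"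
  unfolding cls_pos_def by (cases "finite {x. conf x = c}") auto

lemma sorted_cls_pos: "sorted_wrt (<) (cls_pos conf c)"
  unfolding cls_pos_def by (rule strict_sorted_list_of_set)

lemma sorted_wrt_nth_drop:
  assumes "sorted_wrt R xs" "k < length xs" "y \<in> set (drop (Suc k) xs)"
  shows "R (xs ! k) y"
  using sorted_wrt_drop[OF assms(1), of k] assms(3) unfolding Cons_nth_drop_Suc[OF assms(2), symmetric]
  by simp

lemma set_lower_moves_mono: "c \<le> d \<Longrightarrow> set (lower_moves conf \<omega> c) \<subseteq> set (lower_moves conf \<omega> d)"
  by (rule lift_Suc_mono_le[of "\<lambda>c. set (lower_moves conf \<omega> c)"]) (auto simp: Let_def)

lemma lower_moves_cls: "(a, b) \<in> set (lower_moves conf \<omega> c) \<Longrightarrow> 1 \<le> conf a \<and> conf a < c"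
  by (induction c) (auto simp: Let_def cls_of_mem_cls_pos dest: set_zip_leftD split: if_splits)

lemma lower_moves_complete:
  assumes fin: "finite {x. conf x \<noteq> 0}" and cls: "1 \<le> conf a" "conf a < c"
    and jump: "1 \<le> snd (\<omega> (conf a, a))"
  shows "\<exists>b. (a, b) \<in> set (lower_moves conf \<omega> c) \<and>
           (b = a \<longrightarrow> (\<exists>(a', b') \<in> set (lower_moves conf \<omega> (conf a)). a' < a \<and> a < b')
                    \<or> fst (\<omega> (conf a, a)))"
proof -
  define L ch jj xs where "L = lower_moves conf \<omega> (conf a)" and "ch = (\<lambda>x. fst (\<omega> (conf a, x)))"
    and "jj = (\<lambda>x. snd (\<omega> (conf a, x)))" and "xs = cls_pos conf (conf a)"
  have "a \<in> set xs" using set_cls_pos[OF fin cls(1)] unfolding xs_def by simp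
  then obtain i where i: "i < length xs" "xs ! i = a" by (auto simp: in_set_conv_nth)
  define b where "b = cls_step L ch jj None xs ! i"
  obtain p where b: "b = new_site L ch jj p a (drop (Suc i) xs)"
    using nth_cls_step[OF i(1)] i(2) unfolding b_def by metis
  have "(a, b) \<in> set (zip xs (cls_step L ch jj None xs))"
    using i unfolding b_def by (auto simp: set_zip)
  then have "(a, b) \<in> set (lower_moves conf \<omega> (Suc (conf a)))"
    using cls(1) unfolding L_def ch_def jj_def xs_def by (auto simp: Let_def)
  then have "(a, b) \<in> set (lower_moves conf \<omega> c)"
    using set_lower_moves_mono[of "Suc (conf a)" c] cls(2) by auto
  moreover have "\<forall>y\<in>set (drop (Suc i) xs). a < y"
    using sorted_wrt_nth_drop[OF sorted_cls_pos i(1)[unfolded xs_def]] i(2) unfolding xs_def by simp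
  then have "b = a \<longrightarrow> (\<exists>(a', b') \<in> set L. a' < a \<and> a < b') \<or> ch a"
    using new_site_stays[of L ch jj p a] jump unfolding b jj_def by blast
  ultimately show ?thesis unfolding L_def ch_def by blast
qed

definition lower_sites :: "(int \<Rightarrow> nat) \<Rightarrow> nat \<Rightarrow> int \<Rightarrow> int \<Rightarrow> int set" where
  "lower_sites conf r x y = {a. x < a \<and> a < y \<and> 1 \<le> conf a \<and> conf a < r}"

lemma far_jump_unobstructed:
  assumes kl: "k < length (cls_pos conf r)" and v: "1 \<le> v"
    and far: "cls_pos conf r ! k + int v \<le> new_pos conf \<omega> r ! k"
  defines "x \<equiv> cls_pos conf r ! k" and "L \<equiv> lower_moves conf \<omega> r"
  shows "\<not> (\<exists>(a, b) \<in> set L. a < x \<and> x < b)"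
    and "x + int v \<le> adv {a. (a, a) \<in> set L} x (snd (\<omega> (r, x)))"
    and "(a, b) \<in> set L \<Longrightarrow> a \<noteq> b \<Longrightarrow> x < a \<Longrightarrow> x + int v \<le> a"
proof -
  obtain p where p: "new_pos conf \<omega> r ! k
      = new_site L (\<lambda>x. fst (\<omega> (r, x))) (\<lambda>x. snd (\<omega> (r, x))) p x (drop (Suc k) (cls_pos conf r))"
    using nth_cls_step[OF kl] unfolding new_pos_def L_def x_def by metis
  have "new_pos conf \<omega> r ! k \<noteq> x" using far v unfolding x_def by linarith
  note moved = new_site_moved[OF this[unfolded p]]
  show "\<not> (\<exists>(a, b) \<in> set L. a < x \<and> x < b)" by (rule moved(1))
  show "x + int v \<le> adv {a. (a, a) \<in> set L} x (snd (\<omega> (r, x)))"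
    using moved(2) far p unfolding x_def by simp
  show "x + int v \<le> a" if "(a, b) \<in> set L" "a \<noteq> b" "x < a"
    using moved(3)[OF that] far p unfolding x_def by simp
qed

lemma far_jump_lower_particles_stay:
  assumes fin: "finite {x. conf x \<noteq> 0}" and kl: "k < length (cls_pos conf r)" and v: "1 \<le> v"
    and far: "cls_pos conf r ! k + int v \<le> new_pos conf \<omega> r ! k"
    and jumps: "\<forall>i. 1 \<le> snd (\<omega> i)"
    and a: "a \<in> lower_sites conf r (cls_pos conf r ! k) (cls_pos conf r ! k + int v)"
  shows "fst (\<omega> (conf a, a))"
proof -
  define x L where "x = cls_pos conf r ! k" and "L = lower_moves conf \<omega> r"
  note unobstructed = far_jump_unobstructed[OF kl v far, folded x_def L_def]
  have a_bounds: "x < a" "a < x + int v" "1 \<le> conf a" "conf a < r"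
    using a unfolding lower_sites_def x_def by auto
  obtain b where b: "(a, b) \<in> set L"
    and stays: "b = a \<longrightarrow> (\<exists>(a', b') \<in> set (lower_moves conf \<omega> (conf a)). a' < a \<and> a < b')
                               \<or> fst (\<omega> (conf a, a))"
    using lower_moves_complete[OF fin a_bounds(3,4), of \<omega>] jumps unfolding L_def by blast
  have "b = a" using unobstructed(3)[OF b] a_bounds by fastforce
  txt \<open>A lower particle jumping over a would block x if it started left of x, and would
    cut the jump of x short if it started right of x.\<close>
  moreover have "\<not> (a' < a \<and> a < b')" if ab': "(a', b') \<in> set (lower_moves conf \<omega> (conf a))" for a' b'
  proof
    assume jumps_over: "a' < a \<and> a < b'"
    have "(a', b') \<in> set L"
      using ab' set_lower_moves_mono[of "conf a" r] a_bounds unfolding L_def by auto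
    moreover have "a' \<noteq> x"
      using lower_moves_cls[OF ab'] a_bounds cls_of_mem_cls_pos[of x conf r] kl
      unfolding x_def by (auto simp: nth_mem)
    ultimately show False
      using unobstructed(1,3) jumps_over a_bounds by (cases "a' < x") fastforce+
  qed
  ultimately show ?thesis using stays by blast
qed

lemma far_jump_needs_long_jump:
  assumes kl: "k < length (cls_pos conf r)" and v: "1 \<le> v"
    and far: "cls_pos conf r ! k + int v \<le> new_pos conf \<omega> r ! k"
  defines "x \<equiv> cls_pos conf r ! k"
  shows "v - card (lower_sites conf r x (x + int v)) \<le> snd (\<omega> (r, x))"
proof -
  define A S I where "A = lower_sites conf r x (x + int v)"
    and "S = {a. (a, a) \<in> set (lower_moves conf \<omega> r)}" and "I = {x<..x + int v - 1}"
  have "finite S"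
    using finite_fst_mem_set[of "lower_moves conf \<omega> r" "\<lambda>a b. a = b"] unfolding S_def by simp
  moreover have "x + int v - 1 < adv S x (snd (\<omega> (r, x)))"
    using far_jump_unobstructed(2)[OF kl v far] unfolding x_def S_def by simp
  ultimately have "card (I - S) < snd (\<omega> (r, x))" using card_less_adv v unfolding I_def by simp
  moreover have "I - A \<subseteq> I - S"
    using lower_moves_cls unfolding I_def A_def S_def lower_sites_def by fastforce
  then have "card (I - A) \<le> card (I - S)" unfolding I_def by (intro card_mono) auto
  moreover have "A \<subseteq> I" unfolding A_def I_def lower_sites_def by auto
  then have "card (I - A) = v - 1 - card A"
    by (simp add: card_Diff_subset finite_subset I_def)
  ultimately show ?thesis unfolding A_def by linarith
qed

lemma card_lower_sites_le: "card (lower_sites conf r x (x + int v)) \<le> v - 1"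
proof -
  have "lower_sites conf r x (x + int v) \<subseteq> {x<..x + int v - 1}" unfolding lower_sites_def by auto
  then show ?thesis using card_mono[of "{x<..x + int v - 1}"] by (simp add: nat_diff_distrib')
qed

lemma prob_geometric_pmf_ge:
  assumes "0 < p" "p \<le> 1"
  shows "measure_pmf.prob (geometric_pmf p) {g. m \<le> g} = (1 - p) ^ m"
proof (induction m)
  case 0
  then show ?case by simp
next
  case (Suc m)
  have "{g. Suc m \<le> g} = {g. m \<le> g} - {m}" by auto
  then have "measure_pmf.prob (geometric_pmf p) {g. Suc m \<le> g}
      = measure_pmf.prob (geometric_pmf p) {g. m \<le> g} - measure_pmf.prob (geometric_pmf p) {m}"
    by (simp add: measure_pmf.finite_measure_Diff)
  also have "\<dots> = (1 - p) ^ m - (1 - p) ^ m * p" using Suc assms by (simp add: measure_pmf_single)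
  finally show ?case by (simp add: algebra_simps)
qed

lemma prob_Suc_geometric_pmf_ge:
  assumes "0 \<le> q" "q < 1" "1 \<le> t"
  shows "measure_pmf.prob (map_pmf Suc (geometric_pmf (1 - q))) {m. t \<le> m} = q ^ (t - 1)"
proof -
  have "Suc -` {m. t \<le> m} = {g. t - 1 \<le> g}" using assms(3) by auto
  then show ?thesis using prob_geometric_pmf_ge[of "1 - q" "t - 1"] assms(1,2) by simp
qed

lemma measure_Pi_pmf_Ball:
  assumes "finite I" "J \<subseteq> I"
  shows "measure_pmf.prob (Pi_pmf I d p) {\<omega>. \<forall>i\<in>J. \<omega> i \<in> B i} = (\<Prod>i\<in>J. measure_pmf.prob (p i) (B i))"
proof -
  have "{\<omega>. \<forall>i\<in>J. \<omega> i \<in> B i} = Pi I (\<lambda>i. if i \<in> J then B i else UNIV)"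
    using assms(2) by (auto simp: Pi_def)
  then have "measure_pmf.prob (Pi_pmf I d p) {\<omega>. \<forall>i\<in>J. \<omega> i \<in> B i}
      = (\<Prod>i\<in>I. if i \<in> J then measure_pmf.prob (p i) (B i) else 1)"
    using assms(1) by (simp add: measure_Pi_pmf_Pi if_distrib cong: if_cong)
  also have "\<dots> = (\<Prod>i\<in>J. measure_pmf.prob (p i) (B i))"
    using assms by (simp add: prod.If_cases Int_absorb1)
  finally show ?thesis .
qed

lemma measure_pmf_prob_mono_on_support:
  "E \<inter> set_pmf M \<subseteq> F \<Longrightarrow> measure_pmf.prob M E \<le> measure_pmf.prob M F"
  using measure_pmf.finite_measure_mono[of "E \<inter> set_pmf M" F M] by (simp add: measure_Int_set_pmf)

lemma inputs_jump_ge_1: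
  assumes "finite {x. conf x \<noteq> 0}" "\<omega> \<in> set_pmf (inputs n conf b1 b2)"
  shows "1 \<le> snd (\<omega> i)"
proof -
  let ?I = "{1..n} \<times> {x. conf x \<noteq> 0}"
  have "finite ?I" using assms(1) by simp
  have "\<omega> \<in> PiE_dflt ?I (False, 1)
      (set_pmf \<circ> (\<lambda>_. pair_pmf (bernoulli_pmf b1) (map_pmf Suc (geometric_pmf (1 - b2)))))"
    using set_Pi_pmf_subset'[OF \<open>finite ?I\<close>] assms(2) unfolding inputs_def by (rule subsetD)
  then have all: "\<forall>j. (j \<in> ?I \<longrightarrow>
        \<omega> j \<in> set_pmf (pair_pmf (bernoulli_pmf b1) (map_pmf Suc (geometric_pmf (1 - b2)))))
      \<and> (j \<notin> ?I \<longrightarrow> \<omega> j = (False, 1))"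
    unfolding PiE_dflt_def comp_def by (simp only: mem_Collect_eq)
  have "(i \<in> ?I \<longrightarrow> \<omega> i \<in> set_pmf (bernoulli_pmf b1) \<times> Suc ` set_pmf (geometric_pmf (1 - b2)))
      \<and> (i \<notin> ?I \<longrightarrow> \<omega> i = (False, 1))"
    using spec[OF all, of i] by (simp only: set_pair_pmf set_map_pmf)
  then show ?thesis by (cases "i \<in> ?I") (auto simp: mem_Times_iff)
qed

lemma prob_inputs_coins_and_jump:
  assumes "0 \<le> b1" "b1 \<le> 1" "0 \<le> b2" "b2 < 1" "1 \<le> t"
    and fin: "finite {x. conf x \<noteq> 0}"
    and sites: "insert i0 D \<subseteq> {1..n} \<times> {x. conf x \<noteq> 0}" "i0 \<notin> D"
  shows "measure_pmf.prob (inputs n conf b1 b2) {\<omega>. (\<forall>i\<in>D. fst (\<omega> i)) \<and> t \<le> snd (\<omega> i0)}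
           = b1 ^ card D * b2 ^ (t - 1)"
proof -
  define q where "q = pair_pmf (bernoulli_pmf b1) (map_pmf Suc (geometric_pmf (1 - b2)))"
  define B where "B i = (if i = i0 then UNIV \<times> {m. t \<le> m} else {True} \<times> UNIV)" for i
  have "measure_pmf.prob q (B i0) = b2 ^ (t - 1)"
    using prob_Suc_geometric_pmf_ge[of b2 t] assms(3-5)
    unfolding q_def B_def by (simp add: measure_pmf_prob_product)
  moreover have "measure_pmf.prob q (B i) = b1" if "i \<in> D" for i
    using that sites(2) assms(1,2) unfolding q_def B_def
    by (auto simp: measure_pmf_prob_product measure_pmf_single)
  moreover have "finite D" using sites(1) fin by (auto intro: finite_subset)
  moreover have "{\<omega>. (\<forall>i\<in>D. fst (\<omega> i)) \<and> t \<le> snd (\<omega> i0)} = {\<omega>. \<forall>i\<in>insert i0 D. \<omega> i \<in> B i}"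
    using sites(2) unfolding B_def by (auto simp: mem_Times_iff)
  ultimately show ?thesis
    using measure_Pi_pmf_Ball[OF _ sites(1), where d = "(False, 1)" and p = "\<lambda>_. q" and B = B] fin sites(2)
    unfolding inputs_def q_def by simp
qed

lemma far_jump_event_subset:
  assumes fin: "finite {x. conf x \<noteq> 0}" and kl: "k < length (cls_pos conf r)" and v: "1 \<le> v"
  defines "x \<equiv> cls_pos conf r ! k"
  defines "A \<equiv> lower_sites conf r x (x + int v)"
  shows "{\<omega>. new_pos conf \<omega> r ! k - x \<ge> int v} \<inter> set_pmf (inputs n conf b1 b2)
           \<subseteq> {\<omega>. (\<forall>i\<in>(\<lambda>a. (conf a, a)) ` A. fst (\<omega> i)) \<and> v - card A \<le> snd (\<omega> (r, x))}"
proof (intro subsetI CollectI, elim IntE CollectE)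
  fix \<omega> assume far: "new_pos conf \<omega> r ! k - x \<ge> int v"
    and support: "\<omega> \<in> set_pmf (inputs n conf b1 b2)"
  have "\<forall>i. 1 \<le> snd (\<omega> i)" using inputs_jump_ge_1[OF fin support] by blast
  then show "(\<forall>i\<in>(\<lambda>a. (conf a, a)) ` A. fst (\<omega> i)) \<and> v - card A \<le> snd (\<omega> (r, x))"
    using far_jump_lower_particles_stay[OF fin kl v] far_jump_needs_long_jump[OF kl v] far
    unfolding A_def x_def by auto
qed

theorem lemma2p10:
  fixes b1 b2 :: real and n r k v :: nat and conf :: "int \<Rightarrow> nat"
  assumes "0 < b1" "b1 < b2" "b2 < 1"
    and "finite {x. conf x \<noteq> 0}" "\<forall>x. conf x \<le> n"
    and "1 \<le> r" "r \<le> n" "k < length (cls_pos conf r)"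
  shows "measure_pmf.prob (inputs n conf b1 b2)
           {\<omega>. new_pos conf \<omega> r ! k - cls_pos conf r ! k \<ge> int v}
         \<le> b2 powi (int v - 1)"
proof (cases "v = 0")
  case True
  have "1 \<le> inverse b2" using assms(1-3) by (simp add: one_le_inverse)
  then show ?thesis using True order_trans[OF measure_pmf.prob_le_1] by (simp add: power_int_minus)
next
  case False
  define x A where "x = cls_pos conf r ! k" and "A = lower_sites conf r x (x + int v)"
  define D where "D = (\<lambda>a. (conf a, a)) ` A"
  have "conf x = r" using assms(8) cls_of_mem_cls_pos unfolding x_def by (simp add: nth_mem)
  then have sites: "insert (r, x) D \<subseteq> {1..n} \<times> {x. conf x \<noteq> 0}" "(r, x) \<notin> D" "card D = card A"
    using assms(5-7) unfolding D_def A_def lower_sites_def by (auto simp: card_image inj_on_def)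
  have "measure_pmf.prob (inputs n conf b1 b2) {\<omega>. new_pos conf \<omega> r ! k - x \<ge> int v}
      \<le> measure_pmf.prob (inputs n conf b1 b2) {\<omega>. (\<forall>i\<in>D. fst (\<omega> i)) \<and> v - card A \<le> snd (\<omega> (r, x))}"
    using far_jump_event_subset[OF assms(4,8)] False unfolding D_def A_def x_def
    by (intro measure_pmf_prob_mono_on_support) simp
  also have "\<dots> = b1 ^ card A * b2 ^ (v - card A - 1)"
    using prob_inputs_coins_and_jump[OF _ _ _ _ _ assms(4) sites(1,2)] assms(1-3) sites(3)
      card_lower_sites_le[of conf r x v] False unfolding A_def by simp
  also have "\<dots> \<le> b2 ^ card A * b2 ^ (v - card A - 1)"
    using assms(1,2) by (intro mult_right_mono power_mono) auto
  also have "\<dots> = b2 powi (int v - 1)"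
    using card_lower_sites_le[of conf r x v] False unfolding A_def[symmetric]
    by (simp add: power_add[symmetric] power_int_def nat_diff_distrib)
  finally show ?thesis unfolding x_def .
qed

end
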